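(* Let $\mathcal A$ be an associative commutative $\mathbb F$-algebra and $\mathcal M$ an $\mathcal A$-module. Take $\mathcal U=\mathcal V=\mathcal M$ and $\varkappa=\mathrm{id}_{\mathfrak D(\mathcal M)}$, and let $d$ be the operator on $\Omega(\mathcal M):=\Omega(\mathcal M,\mathcal M)$ given by $d\omega(\xi_0,\dots,\xi_q)=\frac{1}{q+1}\{\sum_{0\le r\le q}(-1)^r\nabla_{\xi_r}(\omega(\xi_0,\dots,\check\xi_r,\dots,\xi_q))+\sum_{0\le r<s\le q}(-1)^{r+s}\omega([\xi_r,\xi_s],\xi_0,\dots,\check\xi_r,\dots,\check\xi_s,\dots,\xi_q)\}$, where $\xi_r=(\nabla_{\xi_r},X_r)\in\mathfrak D(\mathcal M)$. Then $d\circ d=0$ and the complex $\{\Omega^q(\mathcal M),d\}$ is exact: $\mathrm{Ker}\,d|_{\Omega^q(\mathcal M)}=\mathrm{Im}\,d|_{\Omega^{q-1}(\mathcal M)}$ for all $q\in\mathbb Z$, i.e. $H^q(\mathcal M,\mathcal M)=0$ for all $q$.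
   Context: $\mathbb F\in\{\mathbb R,\mathbb C\}$; $\mathcal A$ is an associative commutative $\mathbb F$-algebra. A differentiation of $\mathcal A$ is an $\mathbb F$-linear $X:\mathcal A\to\mathcal A$ with $X(fg)=Xf\cdot g+f\cdot Xg$; $\mathfrak D(\mathcal A)$ is their Lie algebra under the commutator. For an $\mathcal A$-module $\mathcal M$, a differentiation of $\mathcal M$ is a pair $(\nabla_X,X)$ with $\nabla_X$ an $\mathbb F$-linear endomorphism of $\mathcal M$, $X\in\mathfrak D(\mathcal A)$, and $\nabla_X(f\cdot M)=Xf\cdot M+f\cdot\nabla_XM$; $\mathfrak D(\mathcal M)$ is their set, a Lie algebra under the componentwise commutator $[(\nabla_X,X),(\nabla_Y,Y)]=([\nabla_X,\nabla_Y],[X,Y])$ and an $\mathcal A$-module via $f(\nabla_X,X)=(f\nabla_X,fX)$. $\Omega^q(\mathcal M,\mathcal M)=0$ for $q<0$, $=\mathcal M$ for $q=0$, and for $q>0$ is the $\mathcal A$-module of alternating $\mathcal A$-multilinear maps $\mathfrak D(\mathcal M)^q\to\mathcal M$. *)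

theory Defs
  imports Complex_Main
begin

text \<open>The commutative associative (not necessarily unital) F-algebra A is a type 'a of
class comm_ring together with an F-scalar multiplication sA; the A-module M is a type 'm
of class ab_group_add with an F-scalar multiplication sM and an A-action act.\<close>

definition F_algebra_module ::
  "('k::field \<Rightarrow> 'a::comm_ring \<Rightarrow> 'a) \<Rightarrow> ('k \<Rightarrow> 'm::ab_group_add \<Rightarrow> 'm) \<Rightarrow> ('a \<Rightarrow> 'm \<Rightarrow> 'm) \<Rightarrow> bool" where
  "F_algebra_module sA sM act \<longleftrightarrow>
     vector_space sA \<and> vector_space sM \<and>
     (\<forall>c f g. sA c (f * g) = sA c f * g) \<and>
     (\<forall>c f g. f * sA c g = sA c (f * g)) \<and>
     (\<forall>f m n. act f (m + n) = act f m + act f n) \<and>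
     (\<forall>f g m. act (f + g) m = act f m + act g m) \<and>
     (\<forall>f g m. act (f * g) m = act f (act g m)) \<and>
     (\<forall>c f m. act (sA c f) m = sM c (act f m)) \<and>
     (\<forall>c f m. act f (sM c m) = sM c (act f m))"

definition derivA :: "('k::field \<Rightarrow> 'a::comm_ring \<Rightarrow> 'a) \<Rightarrow> ('a \<Rightarrow> 'a) set" where
  "derivA sA = {X. (\<forall>f g. X (f + g) = X f + X g) \<and> (\<forall>c f. X (sA c f) = sA c (X f)) \<and>
                   (\<forall>f g. X (f * g) = X f * g + f * X g)}"

definition derivM ::
  "('k::field \<Rightarrow> 'a::comm_ring \<Rightarrow> 'a) \<Rightarrow> ('k \<Rightarrow> 'm::ab_group_add \<Rightarrow> 'm) \<Rightarrow> ('a \<Rightarrow> 'm \<Rightarrow> 'm)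
     \<Rightarrow> (('m \<Rightarrow> 'm) \<times> ('a \<Rightarrow> 'a)) set" where
  "derivM sA sM act = {(N, X). (\<forall>m n. N (m + n) = N m + N n) \<and> (\<forall>c m. N (sM c m) = sM c (N m)) \<and>
       X \<in> derivA sA \<and> (\<forall>f m. N (act f m) = act (X f) m + act f (N m))}"

definition brD :: "('m::ab_group_add \<Rightarrow> 'm) \<times> ('a::comm_ring \<Rightarrow> 'a) \<Rightarrow> ('m \<Rightarrow> 'm) \<times> ('a \<Rightarrow> 'a)
     \<Rightarrow> ('m \<Rightarrow> 'm) \<times> ('a \<Rightarrow> 'a)" where
  "brD \<xi> \<eta> = ((\<lambda>m. fst \<xi> (fst \<eta> m) - fst \<eta> (fst \<xi> m)), (\<lambda>f. snd \<xi> (snd \<eta> f) - snd \<eta> (snd \<xi> f)))"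

definition addD :: "('m::ab_group_add \<Rightarrow> 'm) \<times> ('a::comm_ring \<Rightarrow> 'a) \<Rightarrow> ('m \<Rightarrow> 'm) \<times> ('a \<Rightarrow> 'a)
     \<Rightarrow> ('m \<Rightarrow> 'm) \<times> ('a \<Rightarrow> 'a)" where
  "addD \<xi> \<eta> = ((\<lambda>m. fst \<xi> m + fst \<eta> m), (\<lambda>f. snd \<xi> f + snd \<eta> f))"

definition actD :: "('a \<Rightarrow> 'm \<Rightarrow> 'm) \<Rightarrow> 'a::comm_ring \<Rightarrow> ('m::ab_group_add \<Rightarrow> 'm) \<times> ('a \<Rightarrow> 'a)
     \<Rightarrow> ('m \<Rightarrow> 'm) \<times> ('a \<Rightarrow> 'a)" where
  "actD act g \<xi> = ((\<lambda>m. act g (fst \<xi> m)), (\<lambda>f. g * snd \<xi> f))"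

definition smulD :: "('k::field \<Rightarrow> 'a::comm_ring \<Rightarrow> 'a) \<Rightarrow> ('k \<Rightarrow> 'm::ab_group_add \<Rightarrow> 'm) \<Rightarrow> 'k
     \<Rightarrow> ('m \<Rightarrow> 'm) \<times> ('a \<Rightarrow> 'a) \<Rightarrow> ('m \<Rightarrow> 'm) \<times> ('a \<Rightarrow> 'a)" where
  "smulD sA sM c \<xi> = ((\<lambda>m. sM c (fst \<xi> m)), (\<lambda>f. sA c (snd \<xi> f)))"

text \<open>A form is a function on lists of elements of D(M); a q-form is normalised to vanish
on all lists that are not in D(M)^q.  Omega q is the set of alternating (F- and)
A-multilinear q-forms; Omega 0 = M (value at the empty list); Omega q = 0 for q < 0.\<close>
definition Omega ::
  "('k::field \<Rightarrow> 'a::comm_ring \<Rightarrow> 'a) \<Rightarrow> ('k \<Rightarrow> 'm::ab_group_add \<Rightarrow> 'm) \<Rightarrow> ('a \<Rightarrow> 'm \<Rightarrow> 'm) \<Rightarrow> int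
     \<Rightarrow> ((('m \<Rightarrow> 'm) \<times> ('a \<Rightarrow> 'a)) list \<Rightarrow> 'm) set" where
  "Omega sA sM act q =
    (let D = derivM sA sM act in
     if q < 0 then {(\<lambda>_. 0)} else
     {\<omega>. (\<forall>xs. \<not> (length xs = nat q \<and> set xs \<subseteq> D) \<longrightarrow> \<omega> xs = 0) \<and>
          (\<forall>xs ys \<xi> \<eta>. length xs + length ys + 1 = nat q \<and> set xs \<subseteq> D \<and> set ys \<subseteq> D \<and> \<xi> \<in> D \<and> \<eta> \<in> D \<longrightarrow>
              \<omega> (xs @ addD \<xi> \<eta> # ys) = \<omega> (xs @ \<xi> # ys) + \<omega> (xs @ \<eta> # ys)) \<and>
          (\<forall>xs ys \<xi> g. length xs + length ys + 1 = nat q \<and> set xs \<subseteq> D \<and> set ys \<subseteq> D \<and> \<xi> \<in> D \<longrightarrow>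
              \<omega> (xs @ actD act g \<xi> # ys) = act g (\<omega> (xs @ \<xi> # ys))) \<and>
          (\<forall>xs ys \<xi> c. length xs + length ys + 1 = nat q \<and> set xs \<subseteq> D \<and> set ys \<subseteq> D \<and> \<xi> \<in> D \<longrightarrow>
              \<omega> (xs @ smulD sA sM c \<xi> # ys) = sM c (\<omega> (xs @ \<xi> # ys))) \<and>
          (\<forall>xs i j. length xs = nat q \<and> set xs \<subseteq> D \<and> i < j \<and> j < length xs \<and> xs ! i = xs ! j \<longrightarrow>
              \<omega> xs = 0)})"

definition omit :: "nat set \<Rightarrow> 'b list \<Rightarrow> 'b list" where
  "omit I xs = map (\<lambda>i. xs ! i) (filter (\<lambda>i. i \<notin> I) [0..<length xs])"

definition dOp ::
  "('k::field \<Rightarrow> 'a::comm_ring \<Rightarrow> 'a) \<Rightarrow> ('k \<Rightarrow> 'm::ab_group_add \<Rightarrow> 'm) \<Rightarrow> ('a \<Rightarrow> 'm \<Rightarrow> 'm)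
     \<Rightarrow> ((('m \<Rightarrow> 'm) \<times> ('a \<Rightarrow> 'a)) list \<Rightarrow> 'm) \<Rightarrow> ((('m \<Rightarrow> 'm) \<times> ('a \<Rightarrow> 'a)) list \<Rightarrow> 'm)" where
  "dOp sA sM act \<omega> xs =
    (if xs \<noteq> [] \<and> set xs \<subseteq> derivM sA sM act then
       sM (1 / of_nat (length xs))
         ((\<Sum>r<length xs. sM ((-1) ^ r) (fst (xs ! r) (\<omega> (omit {r} xs)))) +
          (\<Sum>s<length xs. \<Sum>r<s. sM ((-1) ^ (r + s)) (\<omega> (brD (xs ! r) (xs ! s) # omit {r, s} xs))))
     else 0)"

end

theory Submission
  imports Defs
begin

text \<open>
  The Euler derivation \<open>E = (id, 0)\<close> lies in \<open>D(M)\<close>, commutes with every derivation, and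
  its Lie derivative \<open>L\<^sub>E\<close> is the identity on forms.  For the unnormalised differential
  \<open>d' = (q + 1) d\<close> the Cartan formula \<open>i\<^sub>x d' + d' i\<^sub>x = L\<^sub>x\<close> holds, so a closed form
  satisfies \<open>\<omega> = L\<^sub>E \<omega> = d' (i\<^sub>E \<omega>)\<close> and is exact.  The identity \<open>d' d' = 0\<close> follows by
  induction on the degree from the Cartan formula together with \<open>L\<^sub>x d' = d' L\<^sub>x\<close>, which
  in turn is proved by induction from \<open>[L\<^sub>x, L\<^sub>y] = L\<^sub>[\<^sub>x\<^sub>,\<^sub>y\<^sub>]\<close> (the Jacobi identity).
\<close>

lemma omit_Cons:
  "omit I (x # xs) = (if 0 \<in> I then omit {i. Suc i \<in> I} xs else x # omit {i. Suc i \<in> I} xs)"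
proof -
  have "[0..<length (x # xs)] = 0 # map Suc [0..<length xs]"
    by (simp add: map_Suc_upt upt_conv_Cons del: upt_Suc)
  then show ?thesis unfolding omit_def by (simp add: filter_map comp_def)
qed

lemma omit_empty [simp]: "omit {} xs = xs"
  unfolding omit_def by (simp add: map_nth)

lemma omit_0_Cons [simp]: "omit {0} (x # xs) = xs"
  by (simp add: omit_Cons)

lemma omit_Suc_Cons [simp]: "omit {Suc r} (x # xs) = x # omit {r} xs"
  by (simp add: omit_Cons)

lemma omit_0_Suc_Cons [simp]: "omit {0, Suc s} (x # xs) = omit {s} xs"
  by (simp add: omit_Cons)

lemma omit_Suc_Suc_Cons [simp]: "omit {Suc r, Suc s} (x # xs) = x # omit {r, s} xs"
proof -
  have "{i. Suc i \<in> {Suc r, Suc s}} = {r, s}" by auto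
  then show ?thesis by (simp add: omit_Cons)
qed

lemma set_omit: "set (omit I xs) \<subseteq> set xs"
  unfolding omit_def by auto

lemma length_omit: "length (omit I xs) = card ({..<length xs} - I)"
  unfolding omit_def by (simp add: length_filter_conv_card) (rule arg_cong[where f = card], auto)

lemma length_omit_singleton: "r < length xs \<Longrightarrow> length (omit {r} xs) = length xs - 1"
  by (simp add: length_omit)

lemma length_omit_doubleton: "r < s \<Longrightarrow> s < length xs \<Longrightarrow> length (omit {r, s} xs) = length xs - 2"
  by (simp add: length_omit card_Diff_subset)

lemma sum_list_update_append:
  "(\<Sum>s<length (xs @ z # ys). F ((xs @ z # ys)[s := t ((xs @ z # ys) ! s)])) =
   (\<Sum>s<length xs. F (xs[s := t (xs ! s)] @ z # ys)) + F (xs @ t z # ys) +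
   (\<Sum>s<length ys. F (xs @ z # ys[s := t (ys ! s)]))"
proof (induction xs arbitrary: F)
  case Nil
  show ?case by (simp add: sum.lessThan_Suc_shift del: sum.lessThan_Suc)
next
  case (Cons w xs)
  show ?case
    using Cons.IH[of "\<lambda>l. F (w # l)"]
    by (simp add: sum.lessThan_Suc_shift add.assoc del: sum.lessThan_Suc)
qed

locale module_forms =
  fixes sA :: "'k::field_char_0 \<Rightarrow> 'a::comm_ring \<Rightarrow> 'a"
    and sM :: "'k \<Rightarrow> 'm::ab_group_add \<Rightarrow> 'm"
    and act :: "'a \<Rightarrow> 'm \<Rightarrow> 'm"
  assumes F_algebra_module: "F_algebra_module sA sM act"
begin

sublocale M: vector_space sM
  using F_algebra_module unfolding F_algebra_module_def by auto

sublocale A: vector_space sA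
  using F_algebra_module unfolding F_algebra_module_def by auto

lemma act_add_right: "act f (m + n) = act f m + act f n"
  and act_add_left: "act (f + g) m = act f m + act g m"
  and act_mult: "act (f * g) m = act f (act g m)"
  and act_scale_left: "act (sA c f) m = sM c (act f m)"
  and act_scale_right: "act f (sM c m) = sM c (act f m)"
  and scale_mult_left: "sA c (f * g) = sA c f * g"
  and scale_mult_right: "f * sA c g = sA c (f * g)"
  using F_algebra_module unfolding F_algebra_module_def by auto

lemma act_zero_right [simp]: "act f 0 = 0"
  using act_add_right[of f 0 0] by simp

lemma act_zero_left [simp]: "act 0 m = 0"
  using act_add_left[of 0 0 m] by simp

lemma act_minus_right: "act f (- m) = - act f m"
  using act_add_right[of f m "- m"] by (simp add: add.commute eq_neg_iff_add_eq_0)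

lemma act_diff_right: "act f (m - n) = act f m - act f n"
  using act_add_right[of f "m - n" n] by (simp add: eq_diff_eq)

lemma act_diff_left: "act (f - g) m = act f m - act g m"
  using act_add_left[of "f - g" g m] by (simp add: eq_diff_eq)

lemma act_sum_right: "act f (sum g S) = (\<Sum>i\<in>S. act f (g i))"
  by (induct S rule: infinite_finite_induct) (auto simp: act_add_right)

lemma self_neg_eq_0: "v = - v \<Longrightarrow> v = (0 :: 'm)"
proof -
  assume "v = - v"
  then have "sM 2 v = 0"
    by (simp only: one_add_one[symmetric] M.scale_left_distrib M.scale_one eq_neg_iff_add_eq_0)
  then show "v = 0" by simp
qed

abbreviation D where "D \<equiv> derivM sA sM act"

lemma derivA_add: "X \<in> derivA sA \<Longrightarrow> X (f + g) = X f + X g"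
  and derivA_scale: "X \<in> derivA sA \<Longrightarrow> X (sA c f) = sA c (X f)"
  and derivA_Leibniz: "X \<in> derivA sA \<Longrightarrow> X (f * g) = X f * g + f * X g"
  unfolding derivA_def by auto

lemma derivA_zero: "X \<in> derivA sA \<Longrightarrow> X 0 = 0"
  using derivA_add[of X 0 0] by simp

lemma derivA_diff: "X \<in> derivA sA \<Longrightarrow> X (f - g) = X f - X g"
  using derivA_add[of X "f - g" g] by (simp add: eq_diff_eq)

lemma derivA_I:
  assumes "\<And>f g. X (f + g) = X f + X g" "\<And>c f. X (sA c f) = sA c (X f)"
    "\<And>f g. X (f * g) = X f * g + f * X g"
  shows "X \<in> derivA sA"
  using assms unfolding derivA_def by auto

lemma derivM_add: "\<xi> \<in> D \<Longrightarrow> fst \<xi> (m + n) = fst \<xi> m + fst \<xi> n"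
  and derivM_scale: "\<xi> \<in> D \<Longrightarrow> fst \<xi> (sM c m) = sM c (fst \<xi> m)"
  and derivM_derivA: "\<xi> \<in> D \<Longrightarrow> snd \<xi> \<in> derivA sA"
  and derivM_Leibniz: "\<xi> \<in> D \<Longrightarrow> fst \<xi> (act f m) = act (snd \<xi> f) m + act f (fst \<xi> m)"
  unfolding derivM_def by auto

lemma derivM_zero [simp]: "\<xi> \<in> D \<Longrightarrow> fst \<xi> 0 = 0"
  using derivM_add[of \<xi> 0 0] by simp

lemma derivM_minus: "\<xi> \<in> D \<Longrightarrow> fst \<xi> (- m) = - fst \<xi> m"
  using derivM_add[of \<xi> m "- m"] by (simp add: add.commute eq_neg_iff_add_eq_0)

lemma derivM_diff: "\<xi> \<in> D \<Longrightarrow> fst \<xi> (m - n) = fst \<xi> m - fst \<xi> n"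
  using derivM_add[of \<xi> "m - n" n] by (simp add: eq_diff_eq)

lemma derivM_sum: "\<xi> \<in> D \<Longrightarrow> fst \<xi> (sum g S) = (\<Sum>i\<in>S. fst \<xi> (g i))"
  by (induct S rule: infinite_finite_induct) (auto simp: derivM_add)

lemma derivM_I:
  assumes "\<And>m n. N (m + n) = N m + N n" "\<And>c m. N (sM c m) = sM c (N m)"
    "X \<in> derivA sA" "\<And>f m. N (act f m) = act (X f) m + act f (N m)"
  shows "(N, X) \<in> D"
  using assms unfolding derivM_def by auto

lemma brD_closed:
  assumes \<xi>: "\<xi> \<in> D" and \<eta>: "\<eta> \<in> D"
  shows "brD \<xi> \<eta> \<in> D"
proof -
  note X = derivM_derivA[OF \<xi>] and Y = derivM_derivA[OF \<eta>]
  show ?thesis unfolding brD_def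
  proof (rule derivM_I)
    show "(\<lambda>f. snd \<xi> (snd \<eta> f) - snd \<eta> (snd \<xi> f)) \<in> derivA sA"
      by (rule derivA_I)
        (simp_all add: derivA_add[OF X] derivA_add[OF Y] derivA_scale[OF X] derivA_scale[OF Y]
          derivA_Leibniz[OF X] derivA_Leibniz[OF Y] A.scale_right_diff_distrib algebra_simps)
  qed (simp_all add: derivM_add[OF \<xi>] derivM_add[OF \<eta>] derivM_scale[OF \<xi>] derivM_scale[OF \<eta>]
      derivM_Leibniz[OF \<xi>] derivM_Leibniz[OF \<eta>] M.scale_right_diff_distrib act_diff_left
      act_diff_right)
qed

lemma addD_closed:
  assumes \<xi>: "\<xi> \<in> D" and \<eta>: "\<eta> \<in> D"
  shows "addD \<xi> \<eta> \<in> D"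
  unfolding addD_def
proof (rule derivM_I)
  note X = derivM_derivA[OF \<xi>] and Y = derivM_derivA[OF \<eta>]
  show "(\<lambda>f. snd \<xi> f + snd \<eta> f) \<in> derivA sA"
    by (rule derivA_I)
      (simp_all add: derivA_add[OF X] derivA_add[OF Y] derivA_scale[OF X] derivA_scale[OF Y]
        derivA_Leibniz[OF X] derivA_Leibniz[OF Y] A.scale_right_distrib algebra_simps)
qed (simp_all add: derivM_add[OF \<xi>] derivM_add[OF \<eta>] derivM_scale[OF \<xi>] derivM_scale[OF \<eta>]
    derivM_Leibniz[OF \<xi>] derivM_Leibniz[OF \<eta>] M.scale_right_distrib act_add_left act_add_right
    algebra_simps)

lemma actD_closed:
  assumes \<xi>: "\<xi> \<in> D"
  shows "actD act g \<xi> \<in> D"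
  unfolding actD_def
proof (rule derivM_I)
  note X = derivM_derivA[OF \<xi>]
  show "(\<lambda>f. g * snd \<xi> f) \<in> derivA sA"
    by (rule derivA_I)
      (simp_all add: derivA_add[OF X] derivA_scale[OF X] derivA_Leibniz[OF X] scale_mult_right
        algebra_simps)
  show "act g (fst \<xi> (act f m)) = act (g * snd \<xi> f) m + act f (act g (fst \<xi> m))" for f m
    by (simp add: derivM_Leibniz[OF \<xi>] act_add_right act_mult[symmetric] mult.commute)
qed (simp_all add: derivM_add[OF \<xi>] derivM_scale[OF \<xi>] act_add_right act_scale_right)

lemma smulD_closed:
  assumes \<xi>: "\<xi> \<in> D"
  shows "smulD sA sM c \<xi> \<in> D"
  unfolding smulD_def
proof (rule derivM_I)
  note X = derivM_derivA[OF \<xi>]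
  show "(\<lambda>f. sA c (snd \<xi> f)) \<in> derivA sA"
    by (rule derivA_I)
      (simp_all add: derivA_add[OF X] derivA_scale[OF X] derivA_Leibniz[OF X] scale_mult_left
        scale_mult_right A.scale_right_distrib A.scale_left_commute)
qed (simp_all add: derivM_add[OF \<xi>] derivM_scale[OF \<xi>] derivM_Leibniz[OF \<xi>]
    M.scale_right_distrib act_scale_left act_scale_right M.scale_left_commute)

definition zeroD :: "('m \<Rightarrow> 'm) \<times> ('a \<Rightarrow> 'a)" where
  "zeroD = (\<lambda>m. 0, \<lambda>f. 0)"

definition eulerD :: "('m \<Rightarrow> 'm) \<times> ('a \<Rightarrow> 'a)" where
  "eulerD = (\<lambda>m. m, \<lambda>f. 0)"

lemma zeroD_in_D: "zeroD \<in> D"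
  unfolding zeroD_def by (rule derivM_I) (auto intro!: derivA_I)

lemma eulerD_in_D: "eulerD \<in> D"
  unfolding eulerD_def by (rule derivM_I) (auto intro!: derivA_I)

lemma addD_zeroD_zeroD [simp]: "addD zeroD zeroD = zeroD"
  unfolding addD_def zeroD_def by simp

lemma brD_eulerD: "\<xi> \<in> D \<Longrightarrow> brD eulerD \<xi> = zeroD"
  using derivA_zero[OF derivM_derivA] unfolding brD_def eulerD_def zeroD_def
  by (auto simp: fun_eq_iff)

lemma brD_antisym: "addD (brD \<xi> \<eta>) (brD \<eta> \<xi>) = zeroD"
  unfolding brD_def addD_def zeroD_def by (auto simp: fun_eq_iff)

lemma brD_Jacobi:
  assumes "\<xi> \<in> D" "\<eta> \<in> D" "\<zeta> \<in> D"
  shows "brD \<xi> (brD \<eta> \<zeta>) = addD (brD \<eta> (brD \<xi> \<zeta>)) (brD (brD \<xi> \<eta>) \<zeta>)"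
  using assms unfolding brD_def addD_def
  by (auto simp: fun_eq_iff derivM_diff derivA_diff[OF derivM_derivA])

lemma brD_addD_right:
  "\<xi> \<in> D \<Longrightarrow> brD \<xi> (addD \<eta> \<zeta>) = addD (brD \<xi> \<eta>) (brD \<xi> \<zeta>)"
  unfolding brD_def addD_def by (auto simp: fun_eq_iff derivM_add derivA_add[OF derivM_derivA])

lemma brD_actD_right:
  "\<xi> \<in> D \<Longrightarrow> brD \<xi> (actD act g \<eta>) = addD (actD act g (brD \<xi> \<eta>)) (actD act (snd \<xi> g) \<eta>)"
  unfolding brD_def addD_def actD_def
  by (auto simp: fun_eq_iff derivM_Leibniz derivA_Leibniz[OF derivM_derivA] act_diff_right
      algebra_simps)

lemma brD_smulD_right:
  "\<xi> \<in> D \<Longrightarrow> brD \<xi> (smulD sA sM c \<eta>) = smulD sA sM c (brD \<xi> \<eta>)"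
  unfolding brD_def smulD_def
  by (auto simp: fun_eq_iff derivM_scale derivA_scale[OF derivM_derivA]
      M.scale_right_diff_distrib A.scale_right_diff_distrib)

lemma nth_in_D: "set xs \<subseteq> D \<Longrightarrow> r < length xs \<Longrightarrow> xs ! r \<in> D"
  using nth_mem by blast

lemma list_update_brD_in_D:
  assumes "set ys \<subseteq> D" "\<xi> \<in> D"
  shows "set (ys[s := brD \<xi> (ys ! s)]) \<subseteq> D"
proof (cases "s < length ys")
  case True
  then show ?thesis using assms by (simp add: set_update_subsetI brD_closed nth_in_D)
qed (use assms in \<open>simp add: list_update_beyond\<close>)

definition vanishes_off :: "nat \<Rightarrow> ((('m \<Rightarrow> 'm) \<times> ('a \<Rightarrow> 'a)) list \<Rightarrow> 'm) \<Rightarrow> bool" where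
  "vanishes_off n \<theta> \<longleftrightarrow> (\<forall>xs. \<not> (length xs = n \<and> set xs \<subseteq> D) \<longrightarrow> \<theta> xs = 0)"

definition additive_form :: "((('m \<Rightarrow> 'm) \<times> ('a \<Rightarrow> 'a)) list \<Rightarrow> 'm) \<Rightarrow> bool" where
  "additive_form \<theta> \<longleftrightarrow> (\<forall>xs ys \<xi> \<eta>. set xs \<subseteq> D \<longrightarrow> set ys \<subseteq> D \<longrightarrow> \<xi> \<in> D \<longrightarrow> \<eta> \<in> D \<longrightarrow>
      \<theta> (xs @ addD \<xi> \<eta> # ys) = \<theta> (xs @ \<xi> # ys) + \<theta> (xs @ \<eta> # ys))"

definition antisym_form :: "((('m \<Rightarrow> 'm) \<times> ('a \<Rightarrow> 'a)) list \<Rightarrow> 'm) \<Rightarrow> bool" where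
  "antisym_form \<theta> \<longleftrightarrow> (\<forall>xs ys \<xi> \<eta>. set xs \<subseteq> D \<longrightarrow> set ys \<subseteq> D \<longrightarrow> \<xi> \<in> D \<longrightarrow> \<eta> \<in> D \<longrightarrow>
      \<theta> (xs @ \<xi> # \<eta> # ys) = - \<theta> (xs @ \<eta> # \<xi> # ys))"

definition A_linear_form :: "((('m \<Rightarrow> 'm) \<times> ('a \<Rightarrow> 'a)) list \<Rightarrow> 'm) \<Rightarrow> bool" where
  "A_linear_form \<theta> \<longleftrightarrow> (\<forall>xs ys \<xi> g. set xs \<subseteq> D \<longrightarrow> set ys \<subseteq> D \<longrightarrow> \<xi> \<in> D \<longrightarrow>
      \<theta> (xs @ actD act g \<xi> # ys) = act g (\<theta> (xs @ \<xi> # ys)))"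

definition F_linear_form :: "((('m \<Rightarrow> 'm) \<times> ('a \<Rightarrow> 'a)) list \<Rightarrow> 'm) \<Rightarrow> bool" where
  "F_linear_form \<theta> \<longleftrightarrow> (\<forall>xs ys \<xi> c. set xs \<subseteq> D \<longrightarrow> set ys \<subseteq> D \<longrightarrow> \<xi> \<in> D \<longrightarrow>
      \<theta> (xs @ smulD sA sM c \<xi> # ys) = sM c (\<theta> (xs @ \<xi> # ys)))"

lemma vanishes_offD: "vanishes_off n \<theta> \<Longrightarrow> \<not> (length xs = n \<and> set xs \<subseteq> D) \<Longrightarrow> \<theta> xs = 0"
  unfolding vanishes_off_def by blast

lemma additive_formD:
  "additive_form \<theta> \<Longrightarrow> set xs \<subseteq> D \<Longrightarrow> set ys \<subseteq> D \<Longrightarrow> \<xi> \<in> D \<Longrightarrow> \<eta> \<in> D \<Longrightarrow>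
    \<theta> (xs @ addD \<xi> \<eta> # ys) = \<theta> (xs @ \<xi> # ys) + \<theta> (xs @ \<eta> # ys)"
  unfolding additive_form_def by blast

lemma antisym_formD:
  "antisym_form \<theta> \<Longrightarrow> set xs \<subseteq> D \<Longrightarrow> set ys \<subseteq> D \<Longrightarrow> \<xi> \<in> D \<Longrightarrow> \<eta> \<in> D \<Longrightarrow>
    \<theta> (xs @ \<xi> # \<eta> # ys) = - \<theta> (xs @ \<eta> # \<xi> # ys)"
  unfolding antisym_form_def by blast

lemma A_linear_formD:
  "A_linear_form \<theta> \<Longrightarrow> set xs \<subseteq> D \<Longrightarrow> set ys \<subseteq> D \<Longrightarrow> \<xi> \<in> D \<Longrightarrow>
    \<theta> (xs @ actD act g \<xi> # ys) = act g (\<theta> (xs @ \<xi> # ys))"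
  unfolding A_linear_form_def by blast

lemma F_linear_formD:
  "F_linear_form \<theta> \<Longrightarrow> set xs \<subseteq> D \<Longrightarrow> set ys \<subseteq> D \<Longrightarrow> \<xi> \<in> D \<Longrightarrow>
    \<theta> (xs @ smulD sA sM c \<xi> # ys) = sM c (\<theta> (xs @ \<xi> # ys))"
  unfolding F_linear_form_def by blast

lemma zero_form_props:
  "vanishes_off n (\<lambda>_. 0)" "additive_form (\<lambda>_. 0)" "antisym_form (\<lambda>_. 0)"
  "A_linear_form (\<lambda>_. 0)" "F_linear_form (\<lambda>_. 0)"
  unfolding vanishes_off_def additive_form_def antisym_form_def A_linear_form_def
    F_linear_form_def by auto

lemma additive_form_list_update:
  assumes "additive_form \<theta>" "set zs \<subseteq> D" "s < length zs" "\<xi> \<in> D" "\<eta> \<in> D"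
  shows "\<theta> (zs[s := addD \<xi> \<eta>]) = \<theta> (zs[s := \<xi>]) + \<theta> (zs[s := \<eta>])"
proof -
  have "set (take s zs) \<subseteq> D" "set (drop (Suc s) zs) \<subseteq> D"
    using assms(2) set_take_subset set_drop_subset by (metis order_trans)+
  then show ?thesis
    using additive_formD[OF assms(1) _ _ assms(4,5)] assms(3) by (simp add: upd_conv_take_nth_drop)
qed

lemma additive_form_list_update_zeroD:
  "additive_form \<theta> \<Longrightarrow> set zs \<subseteq> D \<Longrightarrow> s < length zs \<Longrightarrow> \<theta> (zs[s := zeroD]) = 0"
  using additive_form_list_update[of \<theta> zs s zeroD zeroD] zeroD_in_D by simp

text \<open>
  Additivity and antisymmetry are all the Cartan calculus below needs; \<open>A\<close>- and
  \<open>\<bbbF>\<close>-linearity are propagated separately.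
\<close>

definition skew_form :: "nat \<Rightarrow> ((('m \<Rightarrow> 'm) \<times> ('a \<Rightarrow> 'a)) list \<Rightarrow> 'm) \<Rightarrow> bool" where
  "skew_form n \<theta> \<longleftrightarrow> vanishes_off n \<theta> \<and> additive_form \<theta> \<and> antisym_form \<theta>"

definition contr :: "('m \<Rightarrow> 'm) \<times> ('a \<Rightarrow> 'a) \<Rightarrow> ((('m \<Rightarrow> 'm) \<times> ('a \<Rightarrow> 'a)) list \<Rightarrow> 'm)
    \<Rightarrow> ((('m \<Rightarrow> 'm) \<times> ('a \<Rightarrow> 'a)) list \<Rightarrow> 'm)" where
  "contr \<xi> \<theta> = (\<lambda>ys. \<theta> (\<xi> # ys))"

definition lie :: "('m \<Rightarrow> 'm) \<times> ('a \<Rightarrow> 'a) \<Rightarrow> ((('m \<Rightarrow> 'm) \<times> ('a \<Rightarrow> 'a)) list \<Rightarrow> 'm)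
    \<Rightarrow> ((('m \<Rightarrow> 'm) \<times> ('a \<Rightarrow> 'a)) list \<Rightarrow> 'm)" where
  "lie \<xi> \<theta> = (\<lambda>ys. if set ys \<subseteq> D
     then fst \<xi> (\<theta> ys) - (\<Sum>s<length ys. \<theta> (ys[s := brD \<xi> (ys ! s)])) else 0)"

lemma contr_vanishes_off: "vanishes_off (Suc n) \<theta> \<Longrightarrow> vanishes_off n (contr \<xi> \<theta>)"
  unfolding vanishes_off_def contr_def by auto

lemma contr_degree_0: "vanishes_off 0 \<theta> \<Longrightarrow> contr \<xi> \<theta> = (\<lambda>_. 0)"
  unfolding vanishes_off_def contr_def by auto

lemma contr_additive: "\<xi> \<in> D \<Longrightarrow> additive_form \<theta> \<Longrightarrow> additive_form (contr \<xi> \<theta>)"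
  unfolding additive_form_def contr_def by (metis Cons_eq_appendI insert_subset list.simps(15))

lemma contr_antisym: "\<xi> \<in> D \<Longrightarrow> antisym_form \<theta> \<Longrightarrow> antisym_form (contr \<xi> \<theta>)"
  unfolding antisym_form_def contr_def by (metis Cons_eq_appendI insert_subset list.simps(15))

lemma contr_A_linear: "\<xi> \<in> D \<Longrightarrow> A_linear_form \<theta> \<Longrightarrow> A_linear_form (contr \<xi> \<theta>)"
  unfolding A_linear_form_def contr_def by (metis Cons_eq_appendI insert_subset list.simps(15))

lemma contr_F_linear: "\<xi> \<in> D \<Longrightarrow> F_linear_form \<theta> \<Longrightarrow> F_linear_form (contr \<xi> \<theta>)"
  unfolding F_linear_form_def contr_def by (metis Cons_eq_appendI insert_subset list.simps(15))

lemma contr_skew: "\<xi> \<in> D \<Longrightarrow> skew_form (Suc n) \<theta> \<Longrightarrow> skew_form n (contr \<xi> \<theta>)"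
  unfolding skew_form_def using contr_vanishes_off contr_additive contr_antisym by blast

lemma lie_zero: "\<xi> \<in> D \<Longrightarrow> lie \<xi> (\<lambda>_. 0) = (\<lambda>_. 0)"
  unfolding lie_def by (simp add: fun_eq_iff)

lemma lie_diff: "\<xi> \<in> D \<Longrightarrow> lie \<xi> (\<lambda>ys. \<theta> ys - \<psi> ys) = (\<lambda>ys. lie \<xi> \<theta> ys - lie \<xi> \<psi> ys)"
  unfolding lie_def by (auto simp: fun_eq_iff derivM_diff sum_subtractf)

lemma lie_Cons:
  "\<eta> \<in> D \<Longrightarrow> set zs \<subseteq> D \<Longrightarrow> lie \<xi> \<theta> (\<eta> # zs) = lie \<xi> (contr \<eta> \<theta>) zs - \<theta> (brD \<xi> \<eta> # zs)"
  unfolding lie_def contr_def by (simp add: sum.lessThan_Suc_shift del: sum.lessThan_Suc)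

lemma lie_append:
  assumes "set xs \<subseteq> D" "set ys \<subseteq> D" "\<zeta> \<in> D"
  shows "lie \<xi> \<theta> (xs @ \<zeta> # ys) = fst \<xi> (\<theta> (xs @ \<zeta> # ys)) -
     ((\<Sum>s<length xs. \<theta> (xs[s := brD \<xi> (xs ! s)] @ \<zeta> # ys)) + \<theta> (xs @ brD \<xi> \<zeta> # ys) +
      (\<Sum>s<length ys. \<theta> (xs @ \<zeta> # ys[s := brD \<xi> (ys ! s)])))"
proof -
  have "lie \<xi> \<theta> (xs @ \<zeta> # ys) = fst \<xi> (\<theta> (xs @ \<zeta> # ys)) -
      (\<Sum>s<length (xs @ \<zeta> # ys). \<theta> ((xs @ \<zeta> # ys)[s := brD \<xi> ((xs @ \<zeta> # ys) ! s)]))"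
    using assms unfolding lie_def by simp
  then show ?thesis by (simp only: sum_list_update_append)
qed

lemma lie_additive:
  assumes \<xi>: "\<xi> \<in> D" and A: "additive_form \<theta>"
  shows "additive_form (lie \<xi> \<theta>)"
  unfolding additive_form_def
proof (intro allI impI)
  fix xs ys \<eta> \<zeta> assume xs: "set xs \<subseteq> D" and ys: "set ys \<subseteq> D" and \<eta>: "\<eta> \<in> D" and \<zeta>: "\<zeta> \<in> D"
  have left: "\<theta> (xs[s := brD \<xi> (xs ! s)] @ addD \<eta> \<zeta> # ys) =
      \<theta> (xs[s := brD \<xi> (xs ! s)] @ \<eta> # ys) + \<theta> (xs[s := brD \<xi> (xs ! s)] @ \<zeta> # ys)" for s
    using additive_formD[OF A list_update_brD_in_D[OF xs \<xi>] ys \<eta> \<zeta>] .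
  have right: "\<theta> (xs @ addD \<eta> \<zeta> # ys[s := brD \<xi> (ys ! s)]) =
      \<theta> (xs @ \<eta> # ys[s := brD \<xi> (ys ! s)]) + \<theta> (xs @ \<zeta> # ys[s := brD \<xi> (ys ! s)])" for s
    using additive_formD[OF A xs list_update_brD_in_D[OF ys \<xi>] \<eta> \<zeta>] .
  have middle: "\<theta> (xs @ brD \<xi> (addD \<eta> \<zeta>) # ys) = \<theta> (xs @ brD \<xi> \<eta> # ys) + \<theta> (xs @ brD \<xi> \<zeta> # ys)"
    using additive_formD[OF A xs ys brD_closed brD_closed] brD_addD_right \<xi> \<eta> \<zeta> by simp
  show "lie \<xi> \<theta> (xs @ addD \<eta> \<zeta> # ys) = lie \<xi> \<theta> (xs @ \<eta> # ys) + lie \<xi> \<theta> (xs @ \<zeta> # ys)"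
    unfolding lie_append[OF xs ys addD_closed[OF \<eta> \<zeta>]] lie_append[OF xs ys \<eta>] lie_append[OF xs ys \<zeta>]
    by (simp add: left right middle additive_formD[OF A xs ys \<eta> \<zeta>] derivM_add[OF \<xi>] sum.distrib
        algebra_simps)
qed

lemma lie_antisym:
  assumes \<xi>: "\<xi> \<in> D" and S: "antisym_form \<theta>"
  shows "antisym_form (lie \<xi> \<theta>)"
  unfolding antisym_form_def
proof (intro allI impI)
  fix xs ys \<eta> \<zeta> assume xs: "set xs \<subseteq> D" and ys: "set ys \<subseteq> D" and \<eta>: "\<eta> \<in> D" and \<zeta>: "\<zeta> \<in> D"
  have two_slots: "lie \<xi> \<theta> (xs @ u # v # ys) = fst \<xi> (\<theta> (xs @ u # v # ys)) -
     ((\<Sum>s<length xs. \<theta> (xs[s := brD \<xi> (xs ! s)] @ u # v # ys)) + \<theta> (xs @ brD \<xi> u # v # ys) +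
      (\<theta> (xs @ u # brD \<xi> v # ys) + (\<Sum>s<length ys. \<theta> (xs @ u # v # ys[s := brD \<xi> (ys ! s)]))))"
    if "u \<in> D" "v \<in> D" for u v
    using lie_append[OF xs _ that(1), of "v # ys" \<xi> \<theta>] that ys
    by (simp add: sum.lessThan_Suc_shift del: sum.lessThan_Suc)
  have left: "\<theta> (xs[s := brD \<xi> (xs ! s)] @ \<eta> # \<zeta> # ys) = - \<theta> (xs[s := brD \<xi> (xs ! s)] @ \<zeta> # \<eta> # ys)" for s
    using antisym_formD[OF S list_update_brD_in_D[OF xs \<xi>] ys \<eta> \<zeta>] .
  have right: "\<theta> (xs @ \<eta> # \<zeta> # ys[s := brD \<xi> (ys ! s)]) = - \<theta> (xs @ \<zeta> # \<eta> # ys[s := brD \<xi> (ys ! s)])" for s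
    using antisym_formD[OF S xs list_update_brD_in_D[OF ys \<xi>] \<eta> \<zeta>] .
  have middle: "\<theta> (xs @ brD \<xi> \<eta> # \<zeta> # ys) = - \<theta> (xs @ \<zeta> # brD \<xi> \<eta> # ys)"
    "\<theta> (xs @ \<eta> # brD \<xi> \<zeta> # ys) = - \<theta> (xs @ brD \<xi> \<zeta> # \<eta> # ys)"
    using antisym_formD[OF S xs ys brD_closed[OF \<xi> \<eta>] \<zeta>] antisym_formD[OF S xs ys \<eta> brD_closed[OF \<xi> \<zeta>]]
    by simp_all
  show "lie \<xi> \<theta> (xs @ \<eta> # \<zeta> # ys) = - lie \<xi> \<theta> (xs @ \<zeta> # \<eta> # ys)"
    unfolding two_slots[OF \<eta> \<zeta>] two_slots[OF \<zeta> \<eta>]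
    by (simp add: left right middle antisym_formD[OF S xs ys \<eta> \<zeta>] derivM_minus[OF \<xi>] sum_negf
        algebra_simps)
qed

lemma lie_A_linear:
  assumes \<xi>: "\<xi> \<in> D" and A: "additive_form \<theta>" and L: "A_linear_form \<theta>"
  shows "A_linear_form (lie \<xi> \<theta>)"
  unfolding A_linear_form_def
proof (intro allI impI)
  fix xs ys \<eta> g assume xs: "set xs \<subseteq> D" and ys: "set ys \<subseteq> D" and \<eta>: "\<eta> \<in> D"
  have \<xi>\<eta>: "brD \<xi> \<eta> \<in> D" using brD_closed \<xi> \<eta> by blast
  have left: "\<theta> (xs[s := brD \<xi> (xs ! s)] @ actD act g \<eta> # ys) = act g (\<theta> (xs[s := brD \<xi> (xs ! s)] @ \<eta> # ys))" for s
    using A_linear_formD[OF L list_update_brD_in_D[OF xs \<xi>] ys \<eta>] .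
  have right: "\<theta> (xs @ actD act g \<eta> # ys[s := brD \<xi> (ys ! s)]) = act g (\<theta> (xs @ \<eta> # ys[s := brD \<xi> (ys ! s)]))" for s
    using A_linear_formD[OF L xs list_update_brD_in_D[OF ys \<xi>] \<eta>] .
  have middle: "\<theta> (xs @ brD \<xi> (actD act g \<eta>) # ys) =
      act g (\<theta> (xs @ brD \<xi> \<eta> # ys)) + act (snd \<xi> g) (\<theta> (xs @ \<eta> # ys))"
    using additive_formD[OF A xs ys actD_closed[OF \<xi>\<eta>] actD_closed[OF \<eta>]] brD_actD_right[OF \<xi>]
      A_linear_formD[OF L xs ys \<xi>\<eta>] A_linear_formD[OF L xs ys \<eta>] by simp
  show "lie \<xi> \<theta> (xs @ actD act g \<eta> # ys) = act g (lie \<xi> \<theta> (xs @ \<eta> # ys))"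
    unfolding lie_append[OF xs ys actD_closed[OF \<eta>]] lie_append[OF xs ys \<eta>]
    by (simp add: left right middle A_linear_formD[OF L xs ys \<eta>] derivM_Leibniz[OF \<xi>] act_sum_right
        act_diff_right act_add_right algebra_simps)
qed

lemma lie_F_linear:
  assumes \<xi>: "\<xi> \<in> D" and L: "F_linear_form \<theta>"
  shows "F_linear_form (lie \<xi> \<theta>)"
  unfolding F_linear_form_def
proof (intro allI impI)
  fix xs ys \<eta> c assume xs: "set xs \<subseteq> D" and ys: "set ys \<subseteq> D" and \<eta>: "\<eta> \<in> D"
  have left: "\<theta> (xs[s := brD \<xi> (xs ! s)] @ smulD sA sM c \<eta> # ys) = sM c (\<theta> (xs[s := brD \<xi> (xs ! s)] @ \<eta> # ys))" for s
    using F_linear_formD[OF L list_update_brD_in_D[OF xs \<xi>] ys \<eta>] .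
  have right: "\<theta> (xs @ smulD sA sM c \<eta> # ys[s := brD \<xi> (ys ! s)]) = sM c (\<theta> (xs @ \<eta> # ys[s := brD \<xi> (ys ! s)]))" for s
    using F_linear_formD[OF L xs list_update_brD_in_D[OF ys \<xi>] \<eta>] .
  have middle: "\<theta> (xs @ brD \<xi> (smulD sA sM c \<eta>) # ys) = sM c (\<theta> (xs @ brD \<xi> \<eta> # ys))"
    using brD_smulD_right[OF \<xi>] F_linear_formD[OF L xs ys brD_closed[OF \<xi> \<eta>]] by simp
  show "lie \<xi> \<theta> (xs @ smulD sA sM c \<eta> # ys) = sM c (lie \<xi> \<theta> (xs @ \<eta> # ys))"
    unfolding lie_append[OF xs ys smulD_closed[OF \<eta>]] lie_append[OF xs ys \<eta>]
    by (simp add: left right middle F_linear_formD[OF L xs ys \<eta>] derivM_scale[OF \<xi>]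
        M.scale_sum_right M.scale_right_diff_distrib M.scale_right_distrib)
qed

definition dext_sum :: "((('m \<Rightarrow> 'm) \<times> ('a \<Rightarrow> 'a)) list \<Rightarrow> 'm)
    \<Rightarrow> (('m \<Rightarrow> 'm) \<times> ('a \<Rightarrow> 'a)) list \<Rightarrow> 'm" where
  "dext_sum \<theta> xs =
     (\<Sum>r<length xs. sM ((-1) ^ r) (fst (xs ! r) (\<theta> (omit {r} xs)))) +
     (\<Sum>s<length xs. \<Sum>r<s. sM ((-1) ^ (r + s)) (\<theta> (brD (xs ! r) (xs ! s) # omit {r, s} xs)))"

definition dext :: "((('m \<Rightarrow> 'm) \<times> ('a \<Rightarrow> 'a)) list \<Rightarrow> 'm)
    \<Rightarrow> ((('m \<Rightarrow> 'm) \<times> ('a \<Rightarrow> 'a)) list \<Rightarrow> 'm)" where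
  "dext \<theta> = (\<lambda>xs. if xs \<noteq> [] \<and> set xs \<subseteq> D then dext_sum \<theta> xs else 0)"

lemma dOp_eq_scale_dext: "dOp sA sM act \<theta> = (\<lambda>xs. sM (1 / of_nat (length xs)) (dext \<theta> xs))"
  unfolding dOp_def dext_def dext_sum_def by (auto simp: fun_eq_iff)

lemma dext_eq_dext_sum: "set xs \<subseteq> D \<Longrightarrow> dext \<theta> xs = dext_sum \<theta> xs"
  unfolding dext_def dext_sum_def by auto

lemma dext_vanishes_off:
  assumes V: "vanishes_off n \<theta>"
  shows "vanishes_off (Suc n) (dext \<theta>)"
  unfolding vanishes_off_def
proof (intro allI impI)
  fix xs assume len_xs: "\<not> (length xs = Suc n \<and> set xs \<subseteq> D)"
  show "dext \<theta> xs = 0"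
  proof (cases "xs \<noteq> [] \<and> set xs \<subseteq> D")
    case True
    then have len: "length xs \<noteq> Suc n" using len_xs by auto
    have "\<theta> (omit {r} xs) = 0" if "r < length xs" for r
      using len True vanishes_offD[OF V] length_omit_singleton[OF that] by (cases xs) auto
    moreover have "\<theta> (brD (xs ! r) (xs ! s) # omit {r, s} xs) = 0" if "r < s" "s < length xs" for r s
    proof -
      have "length (brD (xs ! r) (xs ! s) # omit {r, s} xs) \<noteq> n"
        using len length_omit_doubleton[OF that] that by auto
      then show ?thesis using vanishes_offD[OF V] by blast
    qed
    ultimately show ?thesis unfolding dext_def dext_sum_def using True nth_in_D[of xs] by simp
  qed (auto simp: dext_def)
qed

lemma dext_diff: "dext (\<lambda>ys. \<theta> ys - \<psi> ys) = (\<lambda>ys. dext \<theta> ys - dext \<psi> ys)"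
proof -
  have "dext_sum (\<lambda>ys. \<theta> ys - \<psi> ys) xs = dext_sum \<theta> xs - dext_sum \<psi> xs" if "set xs \<subseteq> D" for xs
    unfolding dext_sum_def using nth_in_D[OF that]
    by (simp add: derivM_diff M.scale_right_diff_distrib sum_subtractf)
  then show ?thesis unfolding dext_def by (auto simp: fun_eq_iff)
qed

lemma dext_add: "dext (\<lambda>ys. \<theta> ys + \<psi> ys) = (\<lambda>ys. dext \<theta> ys + dext \<psi> ys)"
proof -
  have "dext_sum (\<lambda>ys. \<theta> ys + \<psi> ys) xs = dext_sum \<theta> xs + dext_sum \<psi> xs" if "set xs \<subseteq> D" for xs
    unfolding dext_sum_def using nth_in_D[OF that]
    by (simp add: derivM_add M.scale_right_distrib sum.distrib algebra_simps)
  then show ?thesis unfolding dext_def by (auto simp: fun_eq_iff)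
qed

lemma dext_scale: "dext (\<lambda>ys. sM c (\<theta> ys)) = (\<lambda>ys. sM c (dext \<theta> ys))"
proof -
  have "dext_sum (\<lambda>ys. sM c (\<theta> ys)) xs = sM c (dext_sum \<theta> xs)" if "set xs \<subseteq> D" for xs
    unfolding dext_sum_def using nth_in_D[OF that]
    by (simp add: derivM_scale M.scale_right_distrib M.scale_sum_right M.scale_left_commute
        mult.commute)
  then show ?thesis unfolding dext_def by (auto simp: fun_eq_iff)
qed

lemma dext_zero: "dext (\<lambda>_. 0) = (\<lambda>_. 0)"
  using dext_scale[of 0 "\<lambda>_. 0"] by simp

lemma dext_cong:
  assumes "\<And>ws. set ws \<subseteq> D \<Longrightarrow> \<theta> ws = \<psi> ws"
  shows "dext \<theta> = dext \<psi>"
proof -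
  have "dext_sum \<theta> xs = dext_sum \<psi> xs" if xs: "set xs \<subseteq> D" for xs
  proof -
    have "set (omit {r} xs) \<subseteq> D" for r
      using order_trans[OF set_omit xs] .
    moreover have "set (brD (xs ! r) (xs ! s) # omit {r, s} xs) \<subseteq> D" if "r < s" "s < length xs" for r s
      using order_trans[OF set_omit xs] brD_closed nth_in_D[OF xs] that by auto
    ultimately show ?thesis unfolding dext_sum_def using assms by simp
  qed
  then show ?thesis unfolding dext_def by (auto simp: fun_eq_iff)
qed

lemma dext_eq_0: "(\<And>ws. set ws \<subseteq> D \<Longrightarrow> \<theta> ws = 0) \<Longrightarrow> dext \<theta> = (\<lambda>_. 0)"
  using dext_cong[of \<theta> "\<lambda>_. 0"] dext_zero by simp

lemma antisym_form_Cons_omit: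
  assumes "antisym_form \<theta>" "set ys \<subseteq> D" "\<zeta> \<in> D" "s < length ys"
  shows "\<theta> (\<zeta> # omit {s} ys) = sM ((-1) ^ s) (\<theta> (ys[s := \<zeta>]))"
  using assms
proof (induction s arbitrary: ys \<theta>)
  case 0
  then obtain \<eta> ys' where "ys = \<eta> # ys'" by (cases ys) auto
  then show ?case by simp
next
  case (Suc s)
  then obtain \<eta> ys' where ys: "ys = \<eta> # ys'" by (cases ys) auto
  have \<eta>: "\<eta> \<in> D" and ys': "set ys' \<subseteq> D" using Suc.prems ys by auto
  have "\<theta> (\<zeta> # omit {Suc s} ys) = - contr \<eta> \<theta> (\<zeta> # omit {s} ys')"
    using antisym_formD[OF Suc.prems(1) _ order_trans[OF set_omit ys'] Suc.prems(3) \<eta>, of "[]"] ys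
    by (simp add: contr_def)
  also have "contr \<eta> \<theta> (\<zeta> # omit {s} ys') = sM ((-1) ^ s) (contr \<eta> \<theta> (ys'[s := \<zeta>]))"
    using Suc.IH[OF contr_antisym[OF \<eta> Suc.prems(1)] ys' Suc.prems(3)] Suc.prems(4) ys by simp
  finally show ?case using ys by (simp add: contr_def)
qed

lemma dext_Cons:
  assumes S: "antisym_form \<theta>" and \<xi>: "\<xi> \<in> D" and xs: "set xs \<subseteq> D"
  shows "dext \<theta> (\<xi> # xs) = lie \<xi> \<theta> xs - dext (contr \<xi> \<theta>) xs"
proof -
  have first_sum: "(\<Sum>r<length (\<xi> # xs). sM ((-1) ^ r) (fst ((\<xi> # xs) ! r) (\<theta> (omit {r} (\<xi> # xs))))) =
      fst \<xi> (\<theta> xs) - (\<Sum>r<length xs. sM ((-1) ^ r) (fst (xs ! r) (\<theta> (\<xi> # omit {r} xs))))"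
    by (simp add: sum.lessThan_Suc_shift sum_negf del: sum.lessThan_Suc)
  have moved: "sM ((-1) ^ s) (\<theta> (brD \<xi> (xs ! s) # omit {s} xs)) = \<theta> (xs[s := brD \<xi> (xs ! s)])"
    if "s < length xs" for s
    using antisym_form_Cons_omit[OF S xs brD_closed[OF \<xi> nth_in_D[OF xs that]] that] by simp
  have swapped: "\<theta> (brD (xs ! r) (xs ! s) # \<xi> # omit {r, s} xs) = - \<theta> (\<xi> # brD (xs ! r) (xs ! s) # omit {r, s} xs)"
    if "r < s" "s < length xs" for r s
    using antisym_formD[OF S _ order_trans[OF set_omit xs] brD_closed \<xi>, of "[]"] nth_in_D[OF xs] that
    by simp
  have "(\<Sum>s<length (\<xi> # xs). \<Sum>r<s. sM ((-1) ^ (r + s)) (\<theta> (brD ((\<xi> # xs) ! r) ((\<xi> # xs) ! s) # omit {r, s} (\<xi> # xs)))) =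
      (\<Sum>s<length xs. - sM ((-1) ^ s) (\<theta> (brD \<xi> (xs ! s) # omit {s} xs)) +
          (\<Sum>r<s. sM ((-1) ^ (r + s)) (\<theta> (brD (xs ! r) (xs ! s) # \<xi> # omit {r, s} xs))))"
    by (simp add: sum.lessThan_Suc_shift del: sum.lessThan_Suc)
  also have "\<dots> = (\<Sum>s<length xs. - \<theta> (xs[s := brD \<xi> (xs ! s)]) -
          (\<Sum>r<s. sM ((-1) ^ (r + s)) (\<theta> (\<xi> # brD (xs ! r) (xs ! s) # omit {r, s} xs))))"
    by (rule sum.cong) (simp_all add: moved swapped sum_negf)
  finally have second_sum:
    "(\<Sum>s<length (\<xi> # xs). \<Sum>r<s. sM ((-1) ^ (r + s)) (\<theta> (brD ((\<xi> # xs) ! r) ((\<xi> # xs) ! s) # omit {r, s} (\<xi> # xs)))) =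
     - (\<Sum>s<length xs. \<theta> (xs[s := brD \<xi> (xs ! s)])) -
     (\<Sum>s<length xs. \<Sum>r<s. sM ((-1) ^ (r + s)) (\<theta> (\<xi> # brD (xs ! r) (xs ! s) # omit {r, s} xs)))"
    by (simp add: sum_subtractf sum_negf)
  have \<xi>xs: "set (\<xi> # xs) \<subseteq> D" using \<xi> xs by simp
  show ?thesis
    unfolding dext_eq_dext_sum[OF \<xi>xs] dext_eq_dext_sum[OF xs] dext_sum_def first_sum second_sum
    using xs by (simp add: lie_def contr_def algebra_simps)
qed

lemma contr_dext:
  assumes "antisym_form \<theta>" "\<xi> \<in> D"
  shows "contr \<xi> (dext \<theta>) = (\<lambda>ys. lie \<xi> \<theta> ys - dext (contr \<xi> \<theta>) ys)"
proof
  fix ys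
  show "contr \<xi> (dext \<theta>) ys = lie \<xi> \<theta> ys - dext (contr \<xi> \<theta>) ys"
    using dext_Cons[OF assms, of ys] by (cases "set ys \<subseteq> D") (simp_all add: contr_def dext_def lie_def)
qed

lemma dext_singleton: "antisym_form \<theta> \<Longrightarrow> \<xi> \<in> D \<Longrightarrow> dext \<theta> [\<xi>] = fst \<xi> (\<theta> [])"
  using dext_Cons[of \<theta> \<xi> "[]"] by (simp add: lie_def dext_def)

lemma dext_antisym_step:
  assumes S: "antisym_form \<theta>" and A: "additive_form \<theta>"
    and IH: "\<And>\<xi>. \<xi> \<in> D \<Longrightarrow> antisym_form (dext (contr \<xi> \<theta>))"
  shows "antisym_form (dext \<theta>)"
  unfolding antisym_form_def
proof (intro allI impI)
  fix xs ys \<eta> \<zeta> assume xs: "set xs \<subseteq> D" and ys: "set ys \<subseteq> D" and \<eta>: "\<eta> \<in> D" and \<zeta>: "\<zeta> \<in> D"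
  show "dext \<theta> (xs @ \<eta> # \<zeta> # ys) = - dext \<theta> (xs @ \<zeta> # \<eta> # ys)"
  proof (cases xs)
    case (Cons \<xi> xs')
    have \<xi>: "\<xi> \<in> D" and xs': "set xs' \<subseteq> D" using xs Cons by auto
    show ?thesis
      unfolding Cons append_Cons using xs' ys \<eta> \<zeta>
      by (simp add: dext_Cons[OF S \<xi>] antisym_formD[OF lie_antisym[OF \<xi> S] xs' ys \<eta> \<zeta>] antisym_formD[OF IH[OF \<xi>] xs' ys \<eta> \<zeta>])
  next
    case Nil
    have two_heads: "dext \<theta> (u # v # ys) = lie u (contr v \<theta>) ys - \<theta> (brD u v # ys)
        - lie v (contr u \<theta>) ys + dext (contr v (contr u \<theta>)) ys"
      if u: "u \<in> D" and v: "v \<in> D" for u v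
      using dext_Cons[OF S u, of "v # ys"] dext_Cons[OF contr_antisym[OF u S] v ys]
        lie_Cons[OF v ys, of u \<theta>] u v ys
      by (simp add: algebra_simps)
    have "\<theta> (brD \<eta> \<zeta> # ys) + \<theta> (brD \<zeta> \<eta> # ys) = 0"
      using additive_formD[OF A _ ys brD_closed[OF \<eta> \<zeta>] brD_closed[OF \<zeta> \<eta>], of "[]"]
        additive_formD[OF A _ ys zeroD_in_D zeroD_in_D, of "[]"] brD_antisym[of \<eta> \<zeta>] by simp
    moreover have "dext (contr \<zeta> (contr \<eta> \<theta>)) ys + dext (contr \<eta> (contr \<zeta> \<theta>)) ys = 0"
    proof -
      have "dext (\<lambda>ws. contr \<zeta> (contr \<eta> \<theta>) ws + contr \<eta> (contr \<zeta> \<theta>) ws) = (\<lambda>_. 0)"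
        by (rule dext_eq_0) (use antisym_formD[OF S _ _ \<eta> \<zeta>, of "[]"] in \<open>simp add: contr_def\<close>)
      then show ?thesis using dext_add[of "contr \<zeta> (contr \<eta> \<theta>)" "contr \<eta> (contr \<zeta> \<theta>)"] by metis
    qed
    ultimately show ?thesis
      unfolding Nil append_Nil two_heads[OF \<eta> \<zeta>] two_heads[OF \<zeta> \<eta>]
      by (simp add: algebra_simps eq_neg_iff_add_eq_0)
  qed
qed

text \<open>
  The three preservation lemmas below treat a slot behind the first one by the Cartan formula
  and reduce the first slot to the second by antisymmetry of \<open>d' \<theta>\<close>.
\<close>

lemma dext_additive_step:
  assumes S: "antisym_form \<theta>" and A: "additive_form \<theta>" and SD: "antisym_form (dext \<theta>)"
    and IH: "\<And>\<xi>. \<xi> \<in> D \<Longrightarrow> additive_form (dext (contr \<xi> \<theta>))"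
  shows "additive_form (dext \<theta>)"
proof -
  have later_slot: "dext \<theta> (\<xi> # xs @ addD \<eta> \<zeta> # ys) = dext \<theta> (\<xi> # xs @ \<eta> # ys) + dext \<theta> (\<xi> # xs @ \<zeta> # ys)"
    if \<xi>: "\<xi> \<in> D" and xs: "set xs \<subseteq> D" and ys: "set ys \<subseteq> D" and \<eta>: "\<eta> \<in> D" and \<zeta>: "\<zeta> \<in> D"
    for \<xi> xs ys \<eta> \<zeta>
    using xs ys \<eta> \<zeta> addD_closed[OF \<eta> \<zeta>]
    by (simp add: dext_Cons[OF S \<xi>] additive_formD[OF lie_additive[OF \<xi> A] xs ys \<eta> \<zeta>] additive_formD[OF IH[OF \<xi>] xs ys \<eta> \<zeta>]
        algebra_simps)
  show ?thesis unfolding additive_form_def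
  proof (intro allI impI)
    fix xs ys \<eta> \<zeta> assume xs: "set xs \<subseteq> D" and ys: "set ys \<subseteq> D" and \<eta>: "\<eta> \<in> D" and \<zeta>: "\<zeta> \<in> D"
    show "dext \<theta> (xs @ addD \<eta> \<zeta> # ys) = dext \<theta> (xs @ \<eta> # ys) + dext \<theta> (xs @ \<zeta> # ys)"
    proof (cases xs)
      case (Cons \<xi> xs')
      then show ?thesis using later_slot[of \<xi> xs' ys \<eta> \<zeta>] xs ys \<eta> \<zeta> by simp
    next
      case Nil
      show ?thesis
      proof (cases ys)
        case Nil
        then show ?thesis
          using \<open>xs = []\<close> dext_singleton[OF S] \<eta> \<zeta> addD_closed[OF \<eta> \<zeta>] by (simp add: addD_def)
      next
        case (Cons \<upsilon> ys')
        have \<upsilon>: "\<upsilon> \<in> D" and ys': "set ys' \<subseteq> D" using ys Cons by auto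
        have swap: "dext \<theta> (u # \<upsilon> # ys') = - dext \<theta> (\<upsilon> # [] @ u # ys')" if "u \<in> D" for u
          using antisym_formD[OF SD _ ys' that \<upsilon>, of "[]"] by simp
        show ?thesis
          unfolding \<open>xs = []\<close> Cons append_Nil swap[OF addD_closed[OF \<eta> \<zeta>]] swap[OF \<eta>] swap[OF \<zeta>]
          using later_slot[OF \<upsilon> _ ys' \<eta> \<zeta>, of "[]"] by simp
      qed
    qed
  qed
qed

lemma dext_A_linear_step:
  assumes S: "antisym_form \<theta>" and A: "additive_form \<theta>" and L: "A_linear_form \<theta>"
    and SD: "antisym_form (dext \<theta>)" and IH: "\<And>\<xi>. \<xi> \<in> D \<Longrightarrow> A_linear_form (dext (contr \<xi> \<theta>))"
  shows "A_linear_form (dext \<theta>)"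
proof -
  have later_slot: "dext \<theta> (\<xi> # xs @ actD act g \<eta> # ys) = act g (dext \<theta> (\<xi> # xs @ \<eta> # ys))"
    if \<xi>: "\<xi> \<in> D" and xs: "set xs \<subseteq> D" and ys: "set ys \<subseteq> D" and \<eta>: "\<eta> \<in> D" for \<xi> xs ys \<eta> g
    using xs ys \<eta> actD_closed[OF \<eta>]
    by (simp add: dext_Cons[OF S \<xi>] A_linear_formD[OF lie_A_linear[OF \<xi> A L] xs ys \<eta>]
        A_linear_formD[OF IH[OF \<xi>] xs ys \<eta>] act_diff_right)
  show ?thesis unfolding A_linear_form_def
  proof (intro allI impI)
    fix xs ys \<eta> g assume xs: "set xs \<subseteq> D" and ys: "set ys \<subseteq> D" and \<eta>: "\<eta> \<in> D"
    show "dext \<theta> (xs @ actD act g \<eta> # ys) = act g (dext \<theta> (xs @ \<eta> # ys))"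
    proof (cases xs)
      case (Cons \<xi> xs')
      then show ?thesis using later_slot[of \<xi> xs' ys \<eta> g] xs ys \<eta> by simp
    next
      case Nil
      show ?thesis
      proof (cases ys)
        case Nil
        then show ?thesis
          using \<open>xs = []\<close> dext_singleton[OF S] \<eta> actD_closed[OF \<eta>] by (simp add: actD_def)
      next
        case (Cons \<upsilon> ys')
        have \<upsilon>: "\<upsilon> \<in> D" and ys': "set ys' \<subseteq> D" using ys Cons by auto
        have swap: "dext \<theta> (u # \<upsilon> # ys') = - dext \<theta> (\<upsilon> # [] @ u # ys')" if "u \<in> D" for u
          using antisym_formD[OF SD _ ys' that \<upsilon>, of "[]"] by simp
        show ?thesis
          unfolding \<open>xs = []\<close> Cons append_Nil swap[OF actD_closed[OF \<eta>]] swap[OF \<eta>]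
          using later_slot[OF \<upsilon> _ ys' \<eta>, of "[]"] by (simp add: act_minus_right)
      qed
    qed
  qed
qed

lemma dext_F_linear_step:
  assumes S: "antisym_form \<theta>" and L: "F_linear_form \<theta>"
    and SD: "antisym_form (dext \<theta>)" and IH: "\<And>\<xi>. \<xi> \<in> D \<Longrightarrow> F_linear_form (dext (contr \<xi> \<theta>))"
  shows "F_linear_form (dext \<theta>)"
proof -
  have later_slot: "dext \<theta> (\<xi> # xs @ smulD sA sM c \<eta> # ys) = sM c (dext \<theta> (\<xi> # xs @ \<eta> # ys))"
    if \<xi>: "\<xi> \<in> D" and xs: "set xs \<subseteq> D" and ys: "set ys \<subseteq> D" and \<eta>: "\<eta> \<in> D" for \<xi> xs ys \<eta> c
    using xs ys \<eta> smulD_closed[OF \<eta>]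
    by (simp add: dext_Cons[OF S \<xi>] F_linear_formD[OF lie_F_linear[OF \<xi> L] xs ys \<eta>]
        F_linear_formD[OF IH[OF \<xi>] xs ys \<eta>] M.scale_right_diff_distrib)
  show ?thesis unfolding F_linear_form_def
  proof (intro allI impI)
    fix xs ys \<eta> c assume xs: "set xs \<subseteq> D" and ys: "set ys \<subseteq> D" and \<eta>: "\<eta> \<in> D"
    show "dext \<theta> (xs @ smulD sA sM c \<eta> # ys) = sM c (dext \<theta> (xs @ \<eta> # ys))"
    proof (cases xs)
      case (Cons \<xi> xs')
      then show ?thesis using later_slot[of \<xi> xs' ys \<eta> c] xs ys \<eta> by simp
    next
      case Nil
      show ?thesis
      proof (cases ys)
        case Nil
        then show ?thesis
          using \<open>xs = []\<close> dext_singleton[OF S] \<eta> smulD_closed[OF \<eta>] by (simp add: smulD_def)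
      next
        case (Cons \<upsilon> ys')
        have \<upsilon>: "\<upsilon> \<in> D" and ys': "set ys' \<subseteq> D" using ys Cons by auto
        have swap: "dext \<theta> (u # \<upsilon> # ys') = - dext \<theta> (\<upsilon> # [] @ u # ys')" if "u \<in> D" for u
          using antisym_formD[OF SD _ ys' that \<upsilon>, of "[]"] by simp
        show ?thesis
          unfolding \<open>xs = []\<close> Cons append_Nil swap[OF smulD_closed[OF \<eta>]] swap[OF \<eta>]
          using later_slot[OF \<upsilon> _ ys' \<eta>, of "[]"] by simp
      qed
    qed
  qed
qed

lemma dext_contr_degree_0:
  "vanishes_off 0 \<theta> \<Longrightarrow> dext (contr \<xi> \<theta>) = (\<lambda>_. 0)"
  by (simp add: contr_degree_0 dext_zero)

lemma dext_skew: "skew_form n \<theta> \<Longrightarrow> skew_form (Suc n) (dext \<theta>)"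
proof (induction n arbitrary: \<theta>)
  case 0
  then have "antisym_form (dext \<theta>)"
    using dext_antisym_step zero_form_props dext_contr_degree_0 unfolding skew_form_def by metis
  then show ?case
    using 0 dext_additive_step zero_form_props dext_contr_degree_0 dext_vanishes_off
    unfolding skew_form_def by metis
next
  case (Suc n)
  then have "antisym_form (dext \<theta>)"
    using dext_antisym_step contr_skew unfolding skew_form_def by metis
  then show ?case
    using Suc dext_additive_step contr_skew dext_vanishes_off unfolding skew_form_def by metis
qed

lemma dext_A_linear: "skew_form n \<theta> \<Longrightarrow> A_linear_form \<theta> \<Longrightarrow> A_linear_form (dext \<theta>)"
proof (induction n arbitrary: \<theta>)
  case 0
  then show ?case
    using dext_A_linear_step dext_skew zero_form_props dext_contr_degree_0 unfolding skew_form_def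
    by metis
next
  case (Suc n)
  then show ?case
    using dext_A_linear_step dext_skew contr_skew contr_A_linear unfolding skew_form_def by metis
qed

lemma dext_F_linear: "skew_form n \<theta> \<Longrightarrow> F_linear_form \<theta> \<Longrightarrow> F_linear_form (dext \<theta>)"
proof (induction n arbitrary: \<theta>)
  case 0
  then show ?case
    using dext_F_linear_step dext_skew zero_form_props dext_contr_degree_0 unfolding skew_form_def
    by metis
next
  case (Suc n)
  then show ?case
    using dext_F_linear_step dext_skew contr_skew contr_F_linear unfolding skew_form_def by metis
qed

lemma lie_lie_expand:
  assumes \<xi>: "\<xi> \<in> D" and \<eta>: "\<eta> \<in> D" and zs: "set zs \<subseteq> D"
  shows "lie \<xi> (lie \<eta> \<theta>) zs = fst \<xi> (fst \<eta> (\<theta> zs))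
    - (\<Sum>t<length zs. fst \<xi> (\<theta> (zs[t := brD \<eta> (zs ! t)])))
    - (\<Sum>s<length zs. fst \<eta> (\<theta> (zs[s := brD \<xi> (zs ! s)])))
    + (\<Sum>s<length zs. \<Sum>t<length zs.
         \<theta> ((zs[s := brD \<xi> (zs ! s)])[t := brD \<eta> (zs[s := brD \<xi> (zs ! s)] ! t)]))"
  using zs list_update_brD_in_D[OF zs \<xi>]
  by (simp add: lie_def derivM_diff[OF \<xi>] derivM_sum[OF \<xi>] sum_subtractf algebra_simps)

text \<open>
  In the double sums, the terms with \<open>s \<noteq> t\<close> cancel in pairs; the diagonal terms combine
  by the Jacobi identity.
\<close>

lemma double_update_commutator:
  assumes \<xi>: "\<xi> \<in> D" and \<eta>: "\<eta> \<in> D" and A: "additive_form \<theta>" and zs: "set zs \<subseteq> D"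
  defines "W \<equiv> \<lambda>p q s t. \<theta> ((zs[s := brD p (zs ! s)])[t := brD q (zs[s := brD p (zs ! s)] ! t)])"
  shows "(\<Sum>s<length zs. \<Sum>t<length zs. W \<xi> \<eta> s t) - (\<Sum>s<length zs. \<Sum>t<length zs. W \<eta> \<xi> s t)
    = - (\<Sum>s<length zs. \<theta> (zs[s := brD (brD \<xi> \<eta>) (zs ! s)]))"
proof -
  have diagonal: "(\<Sum>t<length zs. W \<xi> \<eta> s t - W \<eta> \<xi> t s) = - \<theta> (zs[s := brD (brD \<xi> \<eta>) (zs ! s)])"
    if s: "s < length zs" for s
  proof -
    have \<zeta>: "zs ! s \<in> D" using nth_in_D[OF zs s] .
    have "(\<Sum>t<length zs. W \<xi> \<eta> s t - W \<eta> \<xi> t s) =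
        (\<Sum>t<length zs. if t = s then \<theta> (zs[s := brD \<eta> (brD \<xi> (zs ! s))])
          - \<theta> (zs[s := brD \<xi> (brD \<eta> (zs ! s))]) else 0)"
      using s unfolding W_def by (intro sum.cong) (auto simp: list_update_swap)
    also have "\<dots> = \<theta> (zs[s := brD \<eta> (brD \<xi> (zs ! s))]) - \<theta> (zs[s := brD \<xi> (brD \<eta> (zs ! s))])"
      using s by simp
    also have "\<dots> = - \<theta> (zs[s := brD (brD \<xi> \<eta>) (zs ! s)])"
      unfolding brD_Jacobi[OF \<xi> \<eta> \<zeta>]
      using additive_form_list_update[OF A zs s] brD_closed \<xi> \<eta> \<zeta> by simp
    finally show ?thesis .
  qed
  have "(\<Sum>s<length zs. \<Sum>t<length zs. W \<eta> \<xi> s t) = (\<Sum>s<length zs. \<Sum>t<length zs. W \<eta> \<xi> t s)"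
    by (rule sum.swap)
  then have "(\<Sum>s<length zs. \<Sum>t<length zs. W \<xi> \<eta> s t) - (\<Sum>s<length zs. \<Sum>t<length zs. W \<eta> \<xi> s t)
      = (\<Sum>s<length zs. \<Sum>t<length zs. W \<xi> \<eta> s t - W \<eta> \<xi> t s)"
    by (simp add: sum_subtractf)
  also have "\<dots> = (\<Sum>s<length zs. - \<theta> (zs[s := brD (brD \<xi> \<eta>) (zs ! s)]))"
    by (rule sum.cong) (simp_all add: diagonal)
  finally show ?thesis by (simp add: sum_negf)
qed

lemma lie_commutator:
  assumes \<xi>: "\<xi> \<in> D" and \<eta>: "\<eta> \<in> D" and A: "additive_form \<theta>" and zs: "set zs \<subseteq> D"
  shows "lie \<xi> (lie \<eta> \<theta>) zs - lie \<eta> (lie \<xi> \<theta>) zs = lie (brD \<xi> \<eta>) \<theta> zs"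
  using double_update_commutator[OF \<xi> \<eta> A zs] zs
  unfolding lie_lie_expand[OF \<xi> \<eta> zs] lie_lie_expand[OF \<eta> \<xi> zs]
  by (simp add: lie_def brD_def algebra_simps)

lemma dext_lie_step:
  assumes P: "skew_form n \<theta>" and \<xi>: "\<xi> \<in> D"
    and IH: "\<And>\<eta>. \<eta> \<in> D \<Longrightarrow> dext (lie \<xi> (contr \<eta> \<theta>)) = lie \<xi> (dext (contr \<eta> \<theta>))"
  shows "dext (lie \<xi> \<theta>) = lie \<xi> (dext \<theta>)"
proof
  fix ys
  have S: "antisym_form \<theta>" and A: "additive_form \<theta>" using P unfolding skew_form_def by auto
  show "dext (lie \<xi> \<theta>) ys = lie \<xi> (dext \<theta>) ys"
  proof (cases "ys \<noteq> [] \<and> set ys \<subseteq> D")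
    case False
    then show ?thesis using \<xi> by (auto simp: dext_def lie_def)
  next
    case True
    then obtain \<eta> zs where ys: "ys = \<eta> # zs" and \<eta>: "\<eta> \<in> D" and zs: "set zs \<subseteq> D"
      by (cases ys) auto
    have \<xi>\<eta>: "brD \<xi> \<eta> \<in> D" using brD_closed \<xi> \<eta> by blast
    have "dext (contr \<eta> (lie \<xi> \<theta>)) = dext (\<lambda>ws. lie \<xi> (contr \<eta> \<theta>) ws - contr (brD \<xi> \<eta>) \<theta> ws)"
      by (rule dext_cong) (simp add: contr_def lie_Cons[OF \<eta>])
    then have "dext (lie \<xi> \<theta>) ys = lie \<eta> (lie \<xi> \<theta>) zs - lie \<xi> (dext (contr \<eta> \<theta>)) zs
        + dext (contr (brD \<xi> \<eta>) \<theta>) zs"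
      unfolding ys dext_Cons[OF lie_antisym[OF \<xi> S] \<eta> zs] dext_diff IH[OF \<eta>] by simp
    moreover have "lie \<xi> (dext \<theta>) ys = lie \<xi> (lie \<eta> \<theta>) zs - lie \<xi> (dext (contr \<eta> \<theta>)) zs
        - (lie (brD \<xi> \<eta>) \<theta> zs - dext (contr (brD \<xi> \<eta>) \<theta>) zs)"
      unfolding ys lie_Cons[OF \<eta> zs] contr_dext[OF S \<eta>] lie_diff[OF \<xi>] dext_Cons[OF S \<xi>\<eta> zs] ..
    ultimately show ?thesis using lie_commutator[OF \<xi> \<eta> A zs]
      by (simp add: algebra_simps) (metis add_right_cancel)
  qed
qed

lemma dext_lie: "skew_form n \<theta> \<Longrightarrow> \<xi> \<in> D \<Longrightarrow> dext (lie \<xi> \<theta>) = lie \<xi> (dext \<theta>)"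
proof (induction n arbitrary: \<theta> \<xi>)
  case 0
  then show ?case
    using dext_lie_step[OF 0] contr_degree_0 dext_zero lie_zero unfolding skew_form_def by simp
next
  case (Suc n)
  then show ?case using dext_lie_step[OF Suc.prems] Suc.IH contr_skew by blast
qed

lemma dext_dext_step:
  assumes P: "skew_form n \<theta>" and IH: "\<And>\<eta>. \<eta> \<in> D \<Longrightarrow> dext (dext (contr \<eta> \<theta>)) = (\<lambda>_. 0)"
  shows "dext (dext \<theta>) = (\<lambda>_. 0)"
proof
  fix ys
  have S: "antisym_form \<theta>" using P unfolding skew_form_def by auto
  have SD: "antisym_form (dext \<theta>)" using dext_skew[OF P] unfolding skew_form_def by auto
  show "dext (dext \<theta>) ys = 0"
  proof (cases "ys \<noteq> [] \<and> set ys \<subseteq> D")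
    case False
    then show ?thesis by (auto simp: dext_def)
  next
    case True
    then obtain \<eta> zs where ys: "ys = \<eta> # zs" and \<eta>: "\<eta> \<in> D" and zs: "set zs \<subseteq> D"
      by (cases ys) auto
    show ?thesis
      unfolding ys dext_Cons[OF SD \<eta> zs] contr_dext[OF S \<eta>]
      by (simp add: dext_diff IH[OF \<eta>] dext_lie[OF P \<eta>])
  qed
qed

lemma dext_dext: "skew_form n \<theta> \<Longrightarrow> dext (dext \<theta>) = (\<lambda>_. 0)"
proof (induction n arbitrary: \<theta>)
  case 0
  then show ?case
    using dext_dext_step[OF 0] contr_degree_0 dext_zero unfolding skew_form_def by simp
next
  case (Suc n)
  then show ?case using dext_dext_step[OF Suc.prems] Suc.IH contr_skew by blast
qed

definition alternating_form :: "((('m \<Rightarrow> 'm) \<times> ('a \<Rightarrow> 'a)) list \<Rightarrow> 'm) \<Rightarrow> bool" where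
  "alternating_form \<theta> \<longleftrightarrow>
     (\<forall>xs i j. set xs \<subseteq> D \<and> i < j \<and> j < length xs \<and> xs ! i = xs ! j \<longrightarrow> \<theta> xs = 0)"

text \<open>This is where characteristic \<open>0\<close> of the scalars is needed.\<close>

lemma antisym_form_repeated_eq_0:
  assumes S: "antisym_form \<theta>" and bs: "set bs \<subseteq> D" and cs: "set cs \<subseteq> D" and \<xi>: "\<xi> \<in> D"
  shows "set as \<subseteq> D \<Longrightarrow> \<theta> (as @ \<xi> # bs @ \<xi> # cs) = 0"
  using bs
proof (induction bs arbitrary: as)
  case Nil
  then show ?case using antisym_formD[OF S Nil(1) cs \<xi> \<xi>] self_neg_eq_0 by simp
next
  case (Cons \<eta> bs)
  have \<eta>: "\<eta> \<in> D" and bs: "set bs \<subseteq> D" using Cons.prems by auto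
  have "\<theta> (as @ \<xi> # (\<eta> # bs) @ \<xi> # cs) = - \<theta> ((as @ [\<eta>]) @ \<xi> # bs @ \<xi> # cs)"
    using antisym_formD[OF S Cons.prems(1) _ \<xi> \<eta>, of "bs @ \<xi> # cs"] bs cs \<xi> by simp
  also have "\<theta> ((as @ [\<eta>]) @ \<xi> # bs @ \<xi> # cs) = 0"
    using Cons.IH[of "as @ [\<eta>]"] Cons.prems \<eta> bs by simp
  finally show ?case by simp
qed

lemma antisym_imp_alternating:
  assumes S: "antisym_form \<theta>"
  shows "alternating_form \<theta>"
  unfolding alternating_form_def
proof (intro allI impI)
  fix xs i j assume "set xs \<subseteq> D \<and> i < j \<and> j < length xs \<and> xs ! i = xs ! j"
  then have xs: "set xs \<subseteq> D" and ij: "i < j" "j < length xs" and eq: "xs ! i = xs ! j" by auto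
  define bs where "bs = take (j - Suc i) (drop (Suc i) xs)"
  have "drop (Suc i) xs = bs @ drop j xs"
    using ij append_take_drop_id[of "j - Suc i" "drop (Suc i) xs"] unfolding bs_def by simp
  moreover have "drop i xs = xs ! i # drop (Suc i) xs" "drop j xs = xs ! j # drop (Suc j) xs"
    using ij by (simp_all add: Cons_nth_drop_Suc)
  ultimately have split: "xs = take i xs @ xs ! i # bs @ xs ! i # drop (Suc j) xs"
    using append_take_drop_id[of i xs] eq by simp
  have "set (take i xs) \<subseteq> D" "set (drop (Suc j) xs) \<subseteq> D" "set bs \<subseteq> D"
    using order_trans[OF set_take_subset xs] order_trans[OF set_drop_subset xs]
      order_trans[OF set_take_subset order_trans[OF set_drop_subset xs]]
    unfolding bs_def by auto
  moreover have "xs ! i \<in> D" using ij by (simp add: nth_in_D[OF xs])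
  ultimately show "\<theta> xs = 0"
    using antisym_form_repeated_eq_0[OF S] split by metis
qed

lemma alternating_additive_imp_antisym:
  assumes A: "additive_form \<theta>" and T: "alternating_form \<theta>"
  shows "antisym_form \<theta>"
  unfolding antisym_form_def
proof (intro allI impI)
  fix xs ys \<eta> \<zeta> assume xs: "set xs \<subseteq> D" and ys: "set ys \<subseteq> D" and \<eta>: "\<eta> \<in> D" and \<zeta>: "\<zeta> \<in> D"
  have \<eta>\<zeta>: "addD \<eta> \<zeta> \<in> D" using addD_closed \<eta> \<zeta> by blast
  have repeated: "\<theta> (xs @ u # u # ys) = 0" if "u \<in> D" for u
    using T[unfolded alternating_form_def, rule_format, of "xs @ u # u # ys" "length xs" "Suc (length xs)"]
      xs ys that by (simp add: nth_append)
  have "\<theta> (xs @ addD \<eta> \<zeta> # addD \<eta> \<zeta> # ys) = \<theta> (xs @ \<eta> # addD \<eta> \<zeta> # ys) + \<theta> (xs @ \<zeta> # addD \<eta> \<zeta> # ys)"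
    using additive_formD[OF A xs _ \<eta> \<zeta>, of "addD \<eta> \<zeta> # ys"] \<eta>\<zeta> ys by simp
  moreover have "\<theta> (xs @ u # addD \<eta> \<zeta> # ys) = \<theta> (xs @ u # \<eta> # ys) + \<theta> (xs @ u # \<zeta> # ys)" if "u \<in> D" for u
    using additive_formD[OF A _ ys \<eta> \<zeta>, of "xs @ [u]"] xs that by simp
  ultimately show "\<theta> (xs @ \<eta> # \<zeta> # ys) = - \<theta> (xs @ \<zeta> # \<eta> # ys)"
    using repeated \<eta> \<zeta> \<eta>\<zeta> by (simp add: eq_neg_iff_add_eq_0)
qed

definition is_form :: "nat \<Rightarrow> ((('m \<Rightarrow> 'm) \<times> ('a \<Rightarrow> 'a)) list \<Rightarrow> 'm) \<Rightarrow> bool" where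
  "is_form n \<theta> \<longleftrightarrow> vanishes_off n \<theta> \<and> additive_form \<theta> \<and> A_linear_form \<theta> \<and> F_linear_form \<theta>
     \<and> alternating_form \<theta>"

lemma is_form_iff_skew:
  "is_form n \<theta> \<longleftrightarrow> skew_form n \<theta> \<and> A_linear_form \<theta> \<and> F_linear_form \<theta>"
  using antisym_imp_alternating alternating_additive_imp_antisym
  unfolding is_form_def skew_form_def by blast

lemma Omega_neg: "q < 0 \<Longrightarrow> Omega sA sM act q = {\<lambda>_. 0}"
  unfolding Omega_def by simp

text \<open>
  The linearity conditions in \<open>Omega\<close> are only required on lists of length \<open>q\<close>; on other
  lists both sides vanish.
\<close>

lemma Omega_iff_is_form:
  assumes "0 \<le> q"
  shows "\<theta> \<in> Omega sA sM act q \<longleftrightarrow> is_form (nat q) \<theta>"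
proof
  assume "\<theta> \<in> Omega sA sM act q"
  note conds = this[unfolded Omega_def Let_def if_not_P[OF leD[OF assms]] mem_Collect_eq]
  have V: "vanishes_off (nat q) \<theta>"
    using conds[THEN conjunct1] unfolding vanishes_off_def .
  note Omega_conds = conds[THEN conjunct2, THEN conjunct1, rule_format]
    conds[THEN conjunct2, THEN conjunct2, THEN conjunct1, rule_format]
    conds[THEN conjunct2, THEN conjunct2, THEN conjunct2, THEN conjunct1, rule_format]
    conds[THEN conjunct2, THEN conjunct2, THEN conjunct2, THEN conjunct2, rule_format]
  have off: "\<theta> (xs @ \<xi> # ys) = 0" if "length xs + length ys + 1 \<noteq> nat q" for xs ys \<xi>
    using vanishes_offD[OF V] that by simp
  have "additive_form \<theta>" "A_linear_form \<theta>" "F_linear_form \<theta>"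
    unfolding additive_form_def A_linear_form_def F_linear_form_def
    by (intro allI impI; case_tac "length xs + length ys + 1 = nat q";
        simp add: Omega_conds off)+
  moreover have "alternating_form \<theta>"
    unfolding alternating_form_def using Omega_conds(4) vanishes_offD[OF V] by metis
  ultimately show "is_form (nat q) \<theta>" unfolding is_form_def using V by blast
next
  assume "is_form (nat q) \<theta>"
  then have "vanishes_off (nat q) \<theta>" "additive_form \<theta>" "A_linear_form \<theta>" "F_linear_form \<theta>"
    "alternating_form \<theta>"
    unfolding is_form_def by auto
  then show "\<theta> \<in> Omega sA sM act q"
    unfolding Omega_def Let_def if_not_P[OF leD[OF assms]] mem_Collect_eq
    by (intro conjI allI impI; (elim conjE)?;
        (simp add: vanishes_offD additive_formD A_linear_formD F_linear_formD; fail)?)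
      (unfold alternating_form_def, metis)
qed

lemma is_form_scale: "is_form n \<theta> \<Longrightarrow> is_form n (\<lambda>xs. sM c (\<theta> xs))"
  unfolding is_form_def vanishes_off_def additive_form_def A_linear_form_def F_linear_form_def
    alternating_form_def
  by (simp add: M.scale_right_distrib act_scale_right mult.commute)

lemma zero_in_Omega: "q \<le> 0 \<Longrightarrow> (\<lambda>_. 0) \<in> Omega sA sM act q"
  using Omega_neg Omega_iff_is_form[of 0] zero_form_props
  unfolding is_form_def alternating_form_def by (cases "q < 0") auto

lemma dOp_zero: "dOp sA sM act (\<lambda>_. 0) = (\<lambda>_. 0)"
  by (simp add: dOp_eq_scale_dext dext_zero)

lemma dOp_degree:
  assumes "vanishes_off n \<theta>"
  shows "dOp sA sM act \<theta> = (\<lambda>xs. sM (1 / of_nat (Suc n)) (dext \<theta> xs))"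
proof
  fix xs
  show "dOp sA sM act \<theta> xs = sM (1 / of_nat (Suc n)) (dext \<theta> xs)"
    using vanishes_offD[OF dext_vanishes_off[OF assms], of xs]
    by (cases "length xs = Suc n") (auto simp: dOp_eq_scale_dext simp del: of_nat_Suc)
qed

lemma dOp_eq_0_iff: "dOp sA sM act \<theta> = (\<lambda>_. 0) \<longleftrightarrow> dext \<theta> = (\<lambda>_. 0)"
proof
  assume dOp: "dOp sA sM act \<theta> = (\<lambda>_. 0)"
  show "dext \<theta> = (\<lambda>_. 0)"
  proof
    fix xs
    show "dext \<theta> xs = 0"
    proof (cases "xs = []")
      case False
      have "sM (1 / of_nat (length xs)) (dext \<theta> xs) = 0"
        using fun_cong[OF dOp, of xs] unfolding dOp_eq_scale_dext .
      then show ?thesis using False by simp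
    qed (simp add: dext_def)
  qed
qed (simp add: dOp_eq_scale_dext)

lemma dOp_dOp: "\<theta> \<in> Omega sA sM act q \<Longrightarrow> dOp sA sM act (dOp sA sM act \<theta>) = (\<lambda>_. 0)"
proof (cases "q < 0")
  case False
  assume "\<theta> \<in> Omega sA sM act q"
  then have P: "skew_form (nat q) \<theta>"
    using False Omega_iff_is_form is_form_iff_skew by simp
  then have "vanishes_off (nat q) \<theta>" unfolding skew_form_def by simp
  then show ?thesis by (simp add: dOp_eq_0_iff dOp_degree dext_scale dext_dext[OF P])
qed (simp add: Omega_neg dOp_zero)

lemma dOp_in_Omega:
  assumes "\<theta> \<in> Omega sA sM act (q - 1)"
  shows "dOp sA sM act \<theta> \<in> Omega sA sM act q"
proof (cases "q - 1 < 0")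
  case True
  then show ?thesis using assms zero_in_Omega by (simp add: Omega_neg dOp_zero)
next
  case False
  then have "is_form (nat (q - 1)) \<theta>" using assms Omega_iff_is_form by simp
  then have P: "skew_form (nat (q - 1)) \<theta>" and "A_linear_form \<theta>" "F_linear_form \<theta>"
    using is_form_iff_skew by auto
  then have "is_form (Suc (nat (q - 1))) (dext \<theta>)"
    using dext_skew dext_A_linear dext_F_linear is_form_iff_skew by blast
  moreover have "vanishes_off (nat (q - 1)) \<theta>" using P unfolding skew_form_def by simp
  moreover have "nat q = Suc (nat (q - 1))" using False by simp
  ultimately show ?thesis
    using False Omega_iff_is_form[of q] is_form_scale by (simp add: dOp_degree)
qed

lemma lie_eulerD:
  assumes A: "additive_form \<theta>" and xs: "set xs \<subseteq> D"
  shows "lie eulerD \<theta> xs = \<theta> xs"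
  using xs additive_form_list_update_zeroD[OF A xs] brD_eulerD[OF nth_in_D[OF xs]]
  by (simp add: lie_def eulerD_def)

lemma closed_eq_dext_contr_eulerD:
  assumes P: "skew_form n \<theta>" and closed: "dext \<theta> = (\<lambda>_. 0)"
  shows "\<theta> = dext (contr eulerD \<theta>)"
proof
  fix xs
  show "\<theta> xs = dext (contr eulerD \<theta>) xs"
  proof (cases "set xs \<subseteq> D")
    case True
    then show ?thesis
      using dext_Cons[OF _ eulerD_in_D True] lie_eulerD[OF _ True] closed P
      unfolding skew_form_def by (metis diff_self eq_iff_diff_eq_0)
  next
    case False
    then show ?thesis using P vanishes_offD[of n \<theta> xs] unfolding skew_form_def by (simp add: dext_def)
  qed
qed

lemma closed_form_exact:
  assumes \<theta>: "\<theta> \<in> Omega sA sM act q" and closed: "dOp sA sM act \<theta> = (\<lambda>_. 0)"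
  shows "\<theta> \<in> dOp sA sM act ` Omega sA sM act (q - 1)"
proof (cases "q \<le> 0")
  case True
  have "\<theta> = (\<lambda>_. 0)"
  proof (cases "q < 0")
    case False
    then have P: "skew_form 0 \<theta>" using True \<theta> Omega_iff_is_form is_form_iff_skew by simp
    then have "contr eulerD \<theta> = (\<lambda>_. 0)" using contr_degree_0 unfolding skew_form_def by blast
    then show ?thesis
      using closed_eq_dext_contr_eulerD[OF P] closed by (simp add: dOp_eq_0_iff dext_zero)
  qed (use \<theta> Omega_neg in auto)
  moreover have "(\<lambda>_. 0) \<in> Omega sA sM act (q - 1)" using True zero_in_Omega by simp
  ultimately show ?thesis using dOp_zero by (metis image_eqI)
next
  case False
  define n where "n = nat (q - 1)"
  then have q: "nat q = Suc n" using False by simp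
  have "is_form (Suc n) \<theta>" using False \<theta> Omega_iff_is_form q by simp
  then have P: "skew_form (Suc n) \<theta>" and L: "A_linear_form \<theta>" "F_linear_form \<theta>"
    using is_form_iff_skew by auto
  \<comment> \<open>\<open>dOp\<close> multiplies \<open>d'\<close> on \<open>n\<close>-forms by \<open>1 / (n + 1)\<close>, which this factor cancels.\<close>
  define \<eta> where "\<eta> = (\<lambda>xs. sM (of_nat (Suc n)) (contr eulerD \<theta> xs))"
  have "is_form n (contr eulerD \<theta>)"
    using contr_skew[OF eulerD_in_D P] contr_A_linear[OF eulerD_in_D] contr_F_linear[OF eulerD_in_D]
      L is_form_iff_skew by blast
  then have "is_form n \<eta>" unfolding \<eta>_def by (rule is_form_scale)
  then have "\<eta> \<in> Omega sA sM act (q - 1)" using False Omega_iff_is_form n_def by simp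
  moreover have "dOp sA sM act \<eta> = \<theta>"
  proof -
    have V: "vanishes_off n \<eta>" using \<open>is_form n \<eta>\<close> unfolding is_form_def by simp
    have "dOp sA sM act \<eta> = (\<lambda>xs. sM (1 / of_nat (Suc n)) (dext \<eta> xs))"
      using dOp_degree[OF V] .
    also have "\<dots> = dext (contr eulerD \<theta>)"
      unfolding \<eta>_def dext_scale by (simp del: of_nat_Suc)
    also have "\<dots> = \<theta>"
      using closed_eq_dext_contr_eulerD[OF P] closed by (simp add: dOp_eq_0_iff)
    finally show ?thesis .
  qed
  ultimately show ?thesis by blast
qed

lemma dOp_nilpotent_and_exact:
  "(\<forall>q \<omega>. \<omega> \<in> Omega sA sM act q \<longrightarrow> dOp sA sM act (dOp sA sM act \<omega>) = (\<lambda>_. 0)) \<and>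
   (\<forall>q. {\<omega> \<in> Omega sA sM act q. dOp sA sM act \<omega> = (\<lambda>_. 0)} = dOp sA sM act ` Omega sA sM act (q - 1))"
  using dOp_dOp dOp_in_Omega closed_form_exact by blast

end

theorem theorem8:
  shows "(\<forall>(sA :: real \<Rightarrow> 'a::comm_ring \<Rightarrow> 'a) (sM :: real \<Rightarrow> 'm::ab_group_add \<Rightarrow> 'm) act.
            F_algebra_module sA sM act \<longrightarrow>
              (\<forall>q \<omega>. \<omega> \<in> Omega sA sM act q \<longrightarrow> dOp sA sM act (dOp sA sM act \<omega>) = (\<lambda>_. 0)) \<and>
              (\<forall>q. {\<omega> \<in> Omega sA sM act q. dOp sA sM act \<omega> = (\<lambda>_. 0)}
                     = dOp sA sM act ` Omega sA sM act (q - 1))) \<and>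
         (\<forall>(sA :: complex \<Rightarrow> 'a \<Rightarrow> 'a) (sM :: complex \<Rightarrow> 'm \<Rightarrow> 'm) act.
            F_algebra_module sA sM act \<longrightarrow>
              (\<forall>q \<omega>. \<omega> \<in> Omega sA sM act q \<longrightarrow> dOp sA sM act (dOp sA sM act \<omega>) = (\<lambda>_. 0)) \<and>
              (\<forall>q. {\<omega> \<in> Omega sA sM act q. dOp sA sM act \<omega> = (\<lambda>_. 0)}
                     = dOp sA sM act ` Omega sA sM act (q - 1)))"
  by (simp add: module_forms.dOp_nilpotent_and_exact module_forms_def)

end
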